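(* Let $\ell\ge 2$, $K\ge 1$ and $C_0>0$. There is a constant $M=M(K,\ell,C_0)$ such that the following holds. Let $G$ be a bipartite $n$-vertex graph containing no copy of $C_{2\ell}^{\square}$, with average degree $d\ge C_0n^{1/2}$ and maximum degree at most $Kd$, and let $uv\in E(G)$. Then the number of rich $4$-tuples $(w,z,w',z')$ such that $uz,uz',vw,vw'\in E(G)$ and $d(u,w),d(u,w'),d(v,z),d(v,z')\le C_0d^{1/2}$ is at most $Md^2$.
   Context: $d(a,b)$ denotes the number of common neighbours of $a,b$. For distinct vertices $w,z,w',z'$, the $4$-tuple $(w,z,w',z')$ is rich if $wz,w'z'\in E(G)$ and there are at least $4\ell$ pairwise vertex-disjoint edges $xy\in E(G)$ with $wx,xw',zy,yz'\in E(G)$. $C_{2\ell}^{\square}$ consists of two vertex-disjoint $2\ell$-cycles $a_1\cdots a_{2\ell}a_1$, $b_1\cdots b_{2\ell}b_1$ plus the edges $a_ib_i$. *)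

theory Defs
  imports Complex_Main
begin

definition graph :: "'a set \<Rightarrow> ('a \<Rightarrow> 'a \<Rightarrow> bool) \<Rightarrow> bool" where
  "graph V E \<longleftrightarrow> finite V \<and> (\<forall>x y. E x y \<longrightarrow> x \<in> V \<and> y \<in> V)
     \<and> (\<forall>x y. E x y \<longrightarrow> E y x) \<and> (\<forall>x. \<not> E x x)"

definition bipartite :: "'a set \<Rightarrow> ('a \<Rightarrow> 'a \<Rightarrow> bool) \<Rightarrow> bool" where
  "bipartite V E \<longleftrightarrow> (\<exists>A\<subseteq>V. \<forall>x y. E x y \<longrightarrow> (x \<in> A \<longleftrightarrow> y \<notin> A))"

definition degree :: "'a set \<Rightarrow> ('a \<Rightarrow> 'a \<Rightarrow> bool) \<Rightarrow> 'a \<Rightarrow> nat" where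
  "degree V E v = card {w \<in> V. E v w}"

definition avg_degree :: "'a set \<Rightarrow> ('a \<Rightarrow> 'a \<Rightarrow> bool) \<Rightarrow> real" where
  "avg_degree V E = (\<Sum>v\<in>V. real (degree V E v)) / real (card V)"

definition codeg :: "'a set \<Rightarrow> ('a \<Rightarrow> 'a \<Rightarrow> bool) \<Rightarrow> 'a \<Rightarrow> 'a \<Rightarrow> nat" where
  "codeg V E a b = card {c \<in> V. E a c \<and> E b c}"

text \<open>G contains a (not necessarily induced) copy of the prism C_{2l}^square:
  cycles a_0..a_{2l-1}, b_0..b_{2l-1} (indices mod 2l) plus the rungs a_i b_i,
  embedded injectively.\<close>
definition contains_prism :: "'a set \<Rightarrow> ('a \<Rightarrow> 'a \<Rightarrow> bool) \<Rightarrow> nat \<Rightarrow> bool" where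
  "contains_prism V E l \<longleftrightarrow> (\<exists>a b :: nat \<Rightarrow> 'a.
     a ` {..<2*l} \<subseteq> V \<and> b ` {..<2*l} \<subseteq> V \<and>
     inj_on a {..<2*l} \<and> inj_on b {..<2*l} \<and> a ` {..<2*l} \<inter> b ` {..<2*l} = {} \<and>
     (\<forall>i<2*l. E (a i) (a (Suc i mod (2*l))) \<and> E (b i) (b (Suc i mod (2*l))) \<and> E (a i) (b i)))"

definition rich :: "'a set \<Rightarrow> ('a \<Rightarrow> 'a \<Rightarrow> bool) \<Rightarrow> nat \<Rightarrow> 'a \<Rightarrow> 'a \<Rightarrow> 'a \<Rightarrow> 'a \<Rightarrow> bool" where
  "rich V E l w z w' z' \<longleftrightarrow> distinct [w, z, w', z'] \<and> E w z \<and> E w' z' \<and>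
     (\<exists>P :: ('a \<times> 'a) set. finite P \<and> card P \<ge> 4 * l \<and>
        (\<forall>(x, y)\<in>P. E x y \<and> E w x \<and> E x w' \<and> E z y \<and> E y z') \<and>
        (\<forall>p\<in>P. \<forall>q\<in>P. p \<noteq> q \<longrightarrow> {fst p, snd p} \<inter> {fst q, snd q} = {}))"

end

theory Submission
  imports Defs "HOL-Library.Disjoint_Sets"
begin

text \<open>
  Call an edge \<open>wz\<close> with \<open>w \<in> N(v)\<close>, \<open>z \<in> N(u)\<close>, \<open>d(u,w) \<le> c\<close> and \<open>d(v,z) \<le> c\<close> a cross
  edge, where \<open>c = C\<^sub>0 d\<^sup>1\<^sup>/\<^sup>2\<close>. The codegree bounds put every vertex into at most \<open>2c\<close> cross
  edges, and there are at most \<open>\<Delta>c \<le> Kdc\<close> of them. The rich 4-tuples are the edges of the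
  auxiliary graph "is rich" on the cross edges. If some subgraph of it had minimum degree
  above \<open>(2 + 2\<ell>)2c\<close>, a greedy walk would find \<open>\<ell>\<close> vertex-disjoint cross edges, avoiding
  \<open>u, v\<close>, with consecutive ones rich. The \<open>4\<ell>\<close> disjoint edges witnessing each richness leave
  room to pick disjoint bridging rungs between consecutive cross edges, and together with the
  rung \<open>vu\<close> they form a copy of \<open>C\<^sub>2\<^sub>\<ell>\<^sup>\<box>\<close>. So the auxiliary graph is degenerate and has
  \<open>O(\<ell>c \<cdot> Kdc) = O(d\<^sup>2)\<close> edges.
\<close>

definition ends :: "'a \<times> 'a \<Rightarrow> 'a set" where
  "ends r = {fst r, snd r}"

definition vertex_disjoint :: "('a \<times> 'a) set \<Rightarrow> bool" where
  "vertex_disjoint P \<longleftrightarrow> pairwise (\<lambda>p q. disjnt (ends p) (ends q)) P"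

lemma finite_ends [simp]: "finite (ends r)"
  by (simp add: ends_def)

lemma card_ends_le: "card (ends r) \<le> 2"
  unfolding ends_def by (cases "fst r = snd r") auto

lemma card_UN_ends_le: "card (\<Union>i<k. ends (q i)) \<le> 2 * k"
proof -
  have "card (\<Union>i<k. ends (q i)) \<le> (\<Sum>i<k. card (ends (q i)))"
    by (rule card_UN_le) simp
  also have "\<dots> \<le> (\<Sum>i<k. 2)"
    by (rule sum_mono) (rule card_ends_le)
  finally show ?thesis by simp
qed

lemma card_meeting_le:
  assumes "finite X" and load: "\<And>a. real (card {r\<in>R. a \<in> ends r}) \<le> c"
  shows "real (card {r\<in>R. \<not> disjnt (ends r) X}) \<le> real (card X) * c"
proof -
  have "{r\<in>R. \<not> disjnt (ends r) X} = (\<Union>a\<in>X. {r\<in>R. a \<in> ends r})"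
    by (auto simp: disjnt_iff)
  then have "real (card {r\<in>R. \<not> disjnt (ends r) X}) \<le> (\<Sum>a\<in>X. real (card {r\<in>R. a \<in> ends r}))"
    using card_UN_le[OF \<open>finite X\<close>, of "\<lambda>a. {r\<in>R. a \<in> ends r}"]
    by (simp flip: of_nat_sum)
  also have "\<dots> \<le> real (card X) * c"
    using sum_mono[of X _ "\<lambda>_. c"] load by simp
  finally show ?thesis .
qed

lemma exists_avoiding:
  assumes "finite C" "finite X" and load: "\<And>a. real (card {r\<in>C. a \<in> ends r}) \<le> c"
    and "real (card X) * c < real (card C)"
  shows "\<exists>r\<in>C. disjnt (ends r) X"
proof (rule ccontr)
  assume "\<not> ?thesis"
  then have "C = {r\<in>C. \<not> disjnt (ends r) X}" by auto
  then show False using card_meeting_le[OF \<open>finite X\<close> load] assms(4) by simp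
qed

lemma load_vertex_disjoint_le:
  assumes "vertex_disjoint P" "finite P"
  shows "real (card {p\<in>P. a \<in> ends p}) \<le> 1"
proof -
  have "\<forall>p\<in>{p\<in>P. a \<in> ends p}. \<forall>p'\<in>{p\<in>P. a \<in> ends p}. p = p'"
    using assms(1) unfolding vertex_disjoint_def pairwise_def disjnt_def by blast
  then have "card {p\<in>P. a \<in> ends p} \<le> Suc 0"
    using card_le_Suc0_iff_eq[of "{p\<in>P. a \<in> ends p}"] assms(2) by simp
  then show ?thesis by simp
qed

lemma disjoint_family_on_lessThan_Suc_upd:
  assumes "disjoint_family_on (ends \<circ> q) {..<k}" "disjnt (ends r) (\<Union>i<k. ends (q i))"
  shows "disjoint_family_on (ends \<circ> q(k := r)) {..<Suc k}"
proof (unfold disjoint_family_on_def, intro ballI impI)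
  fix i j assume "i \<in> {..<Suc k}" "j \<in> {..<Suc k}" "i \<noteq> j"
  then consider "i < k" "j < k" | "i = k" "j < k" | "i < k" "j = k"
    by fastforce
  then show "(ends \<circ> q(k := r)) i \<inter> (ends \<circ> q(k := r)) j = {}"
    using assms \<open>i \<noteq> j\<close> unfolding disjoint_family_on_def disjnt_def by cases auto
qed

lemma exists_disjoint_representatives:
  assumes "finite A"
    and P: "\<And>i. i < k \<Longrightarrow> finite (P i) \<and> vertex_disjoint (P i) \<and> card A + 2 * k \<le> card (P i)"
  shows "\<exists>m. (\<forall>i<k. m i \<in> P i \<and> disjnt (ends (m i)) A) \<and> disjoint_family_on (ends \<circ> m) {..<k}"
  using P
proof (induction k)
  case 0
  then show ?case by (simp add: disjoint_family_on_def)
next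
  case (Suc k)
  have "finite (P i) \<and> vertex_disjoint (P i) \<and> card A + 2 * k \<le> card (P i)" if "i < k" for i
    using Suc.prems[of i] that by simp
  then obtain m where m: "\<forall>i<k. m i \<in> P i \<and> disjnt (ends (m i)) A"
    "disjoint_family_on (ends \<circ> m) {..<k}"
    using Suc.IH by blast
  define B where "B = A \<union> (\<Union>i<k. ends (m i))"
  have "card B \<le> card A + card (\<Union>i<k. ends (m i))"
    unfolding B_def by (rule card_Un_le)
  also have "\<dots> \<le> card A + 2 * k"
    using card_UN_ends_le by simp
  finally have "card B \<le> card A + 2 * k" .
  moreover have Pk: "finite (P k)" "vertex_disjoint (P k)" "card A + 2 * Suc k \<le> card (P k)"
    using Suc.prems[of k] by auto
  ultimately have "real (card B) * 1 < real (card (P k))" by simp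
  moreover have "finite B" unfolding B_def using \<open>finite A\<close> by simp
  ultimately obtain r where "r \<in> P k" "disjnt (ends r) B"
    using exists_avoiding[OF Pk(1) _ load_vertex_disjoint_le[OF Pk(2,1)]] by blast
  then have "\<forall>i<Suc k. (m(k := r)) i \<in> P i \<and> disjnt (ends ((m(k := r)) i)) A"
    using m unfolding B_def by (simp add: less_Suc_eq)
  moreover have "disjoint_family_on (ends \<circ> m(k := r)) {..<Suc k}"
    using disjoint_family_on_lessThan_Suc_upd[OF m(2)] \<open>disjnt (ends r) B\<close>
    unfolding B_def by simp
  ultimately show ?case by blast
qed

definition disjoint_walk ::
    "('a \<times> 'a) set \<Rightarrow> ('a \<times> 'a \<Rightarrow> 'a \<times> 'a \<Rightarrow> bool) \<Rightarrow> 'a set \<Rightarrow> nat \<Rightarrow> (nat \<Rightarrow> 'a \<times> 'a) \<Rightarrow> bool"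
  where
  "disjoint_walk R L F k q \<longleftrightarrow>
     (\<forall>i<k. q i \<in> R \<and> disjnt (ends (q i)) F) \<and> disjoint_family_on (ends \<circ> q) {..<k} \<and>
     (\<forall>i. Suc i < k \<longrightarrow> L (q i) (q (Suc i)))"

lemma disjoint_walk_mono: "disjoint_walk S L F k q \<Longrightarrow> S \<subseteq> R \<Longrightarrow> disjoint_walk R L F k q"
  unfolding disjoint_walk_def by blast

lemma disjoint_walk_snoc:
  assumes "disjoint_walk R L F k q" "r \<in> R" "disjnt (ends r) (F \<union> (\<Union>i<k. ends (q i)))"
    and "0 < k \<Longrightarrow> L (q (k - 1)) r"
  shows "disjoint_walk R L F (Suc k) (q(k := r))"
proof -
  have "disjoint_family_on (ends \<circ> q(k := r)) {..<Suc k}"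
    using assms(1,3) by (intro disjoint_family_on_lessThan_Suc_upd) (auto simp: disjoint_walk_def)
  moreover have "L ((q(k := r)) i) ((q(k := r)) (Suc i))" if "Suc i < Suc k" for i
    using that assms(1,4) unfolding disjoint_walk_def by (cases "Suc i = k") auto
  ultimately show ?thesis
    using assms(1-3) unfolding disjoint_walk_def by (auto simp: less_Suc_eq)
qed

text \<open>Greedy: a walk of length \<open>k\<close> meets at most \<open>(card F + 2k) c\<close> elements of \<open>R\<close>,
  fewer than the neighbours of its last element, so it can always be extended.\<close>
lemma exists_disjoint_walk:
  assumes "finite R" "finite F" "R \<noteq> {}"
    and load: "\<And>a. real (card {r\<in>R. a \<in> ends r}) \<le> c"
    and deg: "\<And>r. r \<in> R \<Longrightarrow> (real (card F) + 2 * real k) * c < real (card {r'\<in>R. L r r'})"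
  shows "\<exists>q. disjoint_walk R L F k q"
  using deg
proof (induction k)
  case 0
  show ?case by (simp add: disjoint_walk_def disjoint_family_on_def)
next
  case (Suc k)
  have "0 \<le> c" using load[of undefined] by (meson of_nat_0_le_iff order_trans)
  then have "(real (card F) + 2 * real k) * c \<le> (real (card F) + 2 * real (Suc k)) * c"
    by (intro mult_right_mono) auto
  then have "(real (card F) + 2 * real k) * c < real (card {r'\<in>R. L r r'})" if "r \<in> R" for r
    using Suc.prems[OF that] by linarith
  then obtain q where q: "disjoint_walk R L F k q"
    using Suc.IH by blast
  define C where "C = (if k = 0 then R else {r\<in>R. L (q (k - 1)) r})"
  define X where "X = F \<union> (\<Union>i<k. ends (q i))"
  have "card X \<le> card F + card (\<Union>i<k. ends (q i))"
    unfolding X_def by (rule card_Un_le)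
  also have "\<dots> \<le> card F + 2 * k"
    using card_UN_ends_le by simp
  finally have "card X \<le> card F + 2 * k" .
  then have "real (card X) * c \<le> (real (card F) + 2 * real (Suc k)) * c"
    using \<open>0 \<le> c\<close> by (intro mult_right_mono) auto
  also have "\<dots> < real (card C)"
  proof (cases "k = 0")
    case True
    obtain r where "r \<in> R" using \<open>R \<noteq> {}\<close> by blast
    then show ?thesis
      using Suc.prems[of r] card_mono[OF \<open>finite R\<close>, of "{r'\<in>R. L r r'}"] True
      unfolding C_def by force
  next
    case False
    then have "q (k - 1) \<in> R" using q unfolding disjoint_walk_def by simp
    then show ?thesis using Suc.prems False unfolding C_def by simp
  qed
  finally have "real (card X) * c < real (card C)" .
  moreover have "C \<subseteq> R" unfolding C_def by auto
  then have "real (card {r\<in>C. a \<in> ends r}) \<le> c" for a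
    using load[of a] card_mono[of "{r\<in>R. a \<in> ends r}" "{r\<in>C. a \<in> ends r}"] \<open>finite R\<close>
    by fastforce
  moreover have "finite C" "finite X"
    using \<open>C \<subseteq> R\<close> \<open>finite R\<close> \<open>finite F\<close> finite_subset unfolding X_def by auto
  ultimately obtain r where r: "r \<in> C" "disjnt (ends r) X"
    using exists_avoiding[of C X c] by blast
  then have "disjoint_walk R L F (Suc k) (q(k := r))"
    using q unfolding C_def X_def by (intro disjoint_walk_snoc) (auto split: if_splits)
  then show ?case by blast
qed

lemma card_related_pairs_le_degenerate:
  fixes D :: real
  assumes "finite R" "symp L"
    and low: "\<And>S. S \<subseteq> R \<Longrightarrow> S \<noteq> {} \<Longrightarrow> \<exists>r\<in>S. real (card {r'\<in>S. L r r'}) \<le> D"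
  shows "real (card {(r, r'). r \<in> R \<and> r' \<in> R \<and> L r r'}) \<le> 2 * D * real (card R)"
  using assms(1)
proof (induction R rule: finite_remove_induct)
  case empty
  then show ?case by simp
next
  case (remove S)
  obtain r where r: "r \<in> S" "real (card {r'\<in>S. L r r'}) \<le> D"
    using low[OF remove(3,2)] by blast
  define N where "N = {r'\<in>S. L r r'}"
  have "finite N" unfolding N_def using \<open>finite S\<close> by simp
  have "{(x, y). x \<in> S \<and> y \<in> S \<and> L x y} \<subseteq>
      {(x, y). x \<in> S - {r} \<and> y \<in> S - {r} \<and> L x y} \<union> Pair r ` N \<union> (\<lambda>x. (x, r)) ` N"
    using \<open>symp L\<close> unfolding N_def by (auto dest: sympD)
  moreover have "finite {(x, y). x \<in> S - {r} \<and> y \<in> S - {r} \<and> L x y}"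
    by (rule finite_subset[of _ "S \<times> S"]) (use \<open>finite S\<close> in auto)
  ultimately have "card {(x, y). x \<in> S \<and> y \<in> S \<and> L x y} \<le>
      card ({(x, y). x \<in> S - {r} \<and> y \<in> S - {r} \<and> L x y} \<union> Pair r ` N \<union> (\<lambda>x. (x, r)) ` N)"
    using \<open>finite N\<close> by (intro card_mono) auto
  also have "\<dots> \<le> card {(x, y). x \<in> S - {r} \<and> y \<in> S - {r} \<and> L x y} + card (Pair r ` N)
      + card ((\<lambda>x. (x, r)) ` N)"
    by (meson card_Un_le add_le_mono le_refl order_trans)
  also have "\<dots> \<le> card {(x, y). x \<in> S - {r} \<and> y \<in> S - {r} \<and> L x y} + card N + card N"
    using card_image_le[OF \<open>finite N\<close>] by (meson add_le_mono le_refl)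
  finally have "real (card {(x, y). x \<in> S \<and> y \<in> S \<and> L x y}) \<le>
      real (card {(x, y). x \<in> S - {r} \<and> y \<in> S - {r} \<and> L x y}) + real (card N) + real (card N)"
    by linarith
  also have "\<dots> \<le> 2 * D * real (card (S - {r})) + D + D"
    using remove.IH[OF r(1)] r(2) unfolding N_def by linarith
  also have "\<dots> = 2 * D * real (card S)"
    using r(1) \<open>finite S\<close> card_gt_0_iff[of S] by (auto simp: of_nat_diff algebra_simps)
  finally show ?case .
qed

lemma card_related_pairs_le_no_disjoint_walk:
  assumes "finite R" "finite F" "symp L"
    and load: "\<And>a. real (card {r\<in>R. a \<in> ends r}) \<le> c"
    and no_walk: "\<nexists>q. disjoint_walk R L F k q"
  shows "real (card {(r, r'). r \<in> R \<and> r' \<in> R \<and> L r r'})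
    \<le> 2 * ((real (card F) + 2 * real k) * c) * real (card R)"
proof (rule card_related_pairs_le_degenerate[OF assms(1,3)])
  fix S assume "S \<subseteq> R" "S \<noteq> {}"
  show "\<exists>r\<in>S. real (card {r'\<in>S. L r r'}) \<le> (real (card F) + 2 * real k) * c"
  proof (rule ccontr)
    assume "\<not> ?thesis"
    moreover have "finite S" using \<open>S \<subseteq> R\<close> \<open>finite R\<close> finite_subset by blast
    moreover have "real (card {r\<in>S. a \<in> ends r}) \<le> c" for a
      using load[of a] card_mono[of "{r\<in>R. a \<in> ends r}" "{r\<in>S. a \<in> ends r}"] \<open>finite R\<close> \<open>S \<subseteq> R\<close>
      by fastforce
    ultimately obtain q where "disjoint_walk S L F k q"
      using exists_disjoint_walk[of S F c k L] \<open>finite F\<close> \<open>S \<noteq> {}\<close> by force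
    then show False
      using no_walk disjoint_walk_mono \<open>S \<subseteq> R\<close> by blast
  qed
qed

definition adjacent_rungs :: "('a \<Rightarrow> 'a \<Rightarrow> bool) \<Rightarrow> 'a \<times> 'a \<Rightarrow> 'a \<times> 'a \<Rightarrow> bool" where
  "adjacent_rungs E r r' \<longleftrightarrow> E (fst r) (fst r') \<and> E (snd r) (snd r')"

lemma contains_prismI:
  assumes "graph V E"
    and rungs: "\<And>j. j < 2 * l \<Longrightarrow>
      E (fst (\<rho> j)) (snd (\<rho> j)) \<and> adjacent_rungs E (\<rho> j) (\<rho> (Suc j mod (2 * l)))"
    and disj: "disjoint_family_on (ends \<circ> \<rho>) {..<2 * l}"
  shows "contains_prism V E l"
  unfolding contains_prism_def
proof (intro exI conjI)
  have EV: "\<And>x y. E x y \<Longrightarrow> x \<in> V \<and> y \<in> V" and irrefl: "\<And>x. \<not> E x x"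
    using \<open>graph V E\<close> unfolding graph_def by auto
  have disj': "\<And>i j. i < 2 * l \<Longrightarrow> j < 2 * l \<Longrightarrow> i \<noteq> j \<Longrightarrow> ends (\<rho> i) \<inter> ends (\<rho> j) = {}"
    using disj unfolding disjoint_family_on_def by auto
  show "(\<lambda>j. fst (\<rho> j)) ` {..<2 * l} \<subseteq> V" "(\<lambda>j. snd (\<rho> j)) ` {..<2 * l} \<subseteq> V"
    using rungs EV by auto
  show "inj_on (\<lambda>j. fst (\<rho> j)) {..<2 * l}" "inj_on (\<lambda>j. snd (\<rho> j)) {..<2 * l}"
    using disj' unfolding inj_on_def ends_def by blast+
  show "(\<lambda>j. fst (\<rho> j)) ` {..<2 * l} \<inter> (\<lambda>j. snd (\<rho> j)) ` {..<2 * l} = {}"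
  proof (rule ccontr)
    assume "\<not> ?thesis"
    then obtain i j where "i < 2 * l" "j < 2 * l" "fst (\<rho> i) = snd (\<rho> j)" by auto
    then show False
      using disj'[of i j] rungs[of i] irrefl unfolding ends_def by (cases "i = j") auto
  qed
  show "\<forall>i<2 * l. E (fst (\<rho> i)) (fst (\<rho> (Suc i mod (2 * l)))) \<and>
      E (snd (\<rho> i)) (snd (\<rho> (Suc i mod (2 * l)))) \<and> E (fst (\<rho> i)) (snd (\<rho> i))"
    using rungs unfolding adjacent_rungs_def by blast
qed

lemma contains_prism_alternating_rungsI:
  assumes "graph V E"
    and rungs: "\<And>i. i < l \<Longrightarrow> E (fst (h i)) (snd (h i)) \<and> E (fst (q i)) (snd (q i)) \<and>
      adjacent_rungs E (h i) (q i) \<and> adjacent_rungs E (q i) (h (Suc i mod l))"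
    and disj_h: "disjoint_family_on (ends \<circ> h) {..<l}"
    and disj_q: "disjoint_family_on (ends \<circ> q) {..<l}"
    and disj_hq: "\<And>i j. i < l \<Longrightarrow> j < l \<Longrightarrow> disjnt (ends (h i)) (ends (q j))"
  shows "contains_prism V E l"
proof -
  define \<rho> where "\<rho> j = (if even j then h (j div 2) else q (j div 2))" for j
  have "E (fst (\<rho> j)) (snd (\<rho> j)) \<and> adjacent_rungs E (\<rho> j) (\<rho> (Suc j mod (2 * l)))"
    if "j < 2 * l" for j
  proof -
    have "j div 2 < l" using that by linarith
    moreover have "j = 2 * (j div 2) \<or> j = 2 * (j div 2) + 1" by presburger
    ultimately consider i where "i < l" "j = 2 * i" | i where "i < l" "j = 2 * i + 1"
      by blast
    then show ?thesis
    proof cases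
      case (1 i)
      then have "Suc j mod (2 * l) = 2 * i + 1" by simp
      then show ?thesis using rungs[of i] 1 unfolding \<rho>_def by simp
    next
      case (2 i)
      then have "Suc j mod (2 * l) = 2 * (Suc i mod l)"
        by (simp add: mult_mod_right)
      then show ?thesis using rungs[of i] 2 unfolding \<rho>_def by simp
    qed
  qed
  moreover have "disjoint_family_on (ends \<circ> \<rho>) {..<2 * l}"
  proof (unfold disjoint_family_on_def, intro ballI impI)
    fix j j' assume "j \<in> {..<2 * l}" "j' \<in> {..<2 * l}" "j \<noteq> j'"
    then have "j div 2 < l" "j' div 2 < l" by auto
    moreover have "even j = even j' \<Longrightarrow> j div 2 \<noteq> j' div 2"
      using \<open>j \<noteq> j'\<close> by presburger
    ultimately show "(ends \<circ> \<rho>) j \<inter> (ends \<circ> \<rho>) j' = {}"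
      using disj_h disj_q disj_hq[of "j div 2" "j' div 2"] disj_hq[of "j' div 2" "j div 2"]
      unfolding \<rho>_def disjoint_family_on_def disjnt_def by (cases "even j"; cases "even j'") auto
  qed
  ultimately show ?thesis by (rule contains_prismI[OF \<open>graph V E\<close>])
qed

definition rich_pair :: "'a set \<Rightarrow> ('a \<Rightarrow> 'a \<Rightarrow> bool) \<Rightarrow> nat \<Rightarrow> 'a \<times> 'a \<Rightarrow> 'a \<times> 'a \<Rightarrow> bool" where
  "rich_pair V E l r r' \<longleftrightarrow> rich V E l (fst r) (snd r) (fst r') (snd r')"

lemma symp_rich_pair:
  assumes "graph V E"
  shows "symp (rich_pair V E l)"
proof (rule sympI)
  fix r r' assume "rich_pair V E l r r'"
  then obtain P where "distinct [fst r, snd r, fst r', snd r']" "E (fst r) (snd r)" "E (fst r') (snd r')"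
    and P: "finite P" "card P \<ge> 4 * l"
      "\<forall>(x, y)\<in>P. E x y \<and> E (fst r) x \<and> E x (fst r') \<and> E (snd r) y \<and> E y (snd r')"
      "\<forall>p\<in>P. \<forall>q\<in>P. p \<noteq> q \<longrightarrow> {fst p, snd p} \<inter> {fst q, snd q} = {}"
    unfolding rich_pair_def rich_def by blast
  moreover have "distinct [fst r', snd r', fst r, snd r]"
    using \<open>distinct [fst r, snd r, fst r', snd r']\<close> by auto
  moreover have "\<forall>(x, y)\<in>P. E x y \<and> E (fst r') x \<and> E x (fst r) \<and> E (snd r') y \<and> E y (snd r)"
    using P(3) \<open>graph V E\<close> unfolding graph_def by blast
  ultimately show "rich_pair V E l r' r"
    unfolding rich_pair_def rich_def by blast
qed

lemma rich_pair_bridges: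
  assumes "rich_pair V E l r r'"
  shows "\<exists>P. finite P \<and> vertex_disjoint P \<and> 4 * l \<le> card P \<and>
    (\<forall>p\<in>P. E (fst p) (snd p) \<and> adjacent_rungs E r p \<and> adjacent_rungs E p r')"
proof -
  obtain P where P: "finite P" "card P \<ge> 4 * l"
      "\<forall>(x, y)\<in>P. E x y \<and> E (fst r) x \<and> E x (fst r') \<and> E (snd r) y \<and> E y (snd r')"
      "\<forall>p\<in>P. \<forall>q\<in>P. p \<noteq> q \<longrightarrow> {fst p, snd p} \<inter> {fst q, snd q} = {}"
    using assms unfolding rich_pair_def rich_def by blast
  have "vertex_disjoint P"
    using P(4) unfolding vertex_disjoint_def pairwise_def disjnt_def ends_def by blast
  moreover have "\<forall>p\<in>P. E (fst p) (snd p) \<and> adjacent_rungs E r p \<and> adjacent_rungs E p r'"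
    using P(3) unfolding adjacent_rungs_def by auto
  ultimately show ?thesis using P(1,2) by blast
qed

lemma exists_bridging_rungs:
  assumes "2 \<le> l" "finite F" "card F \<le> 2"
    and walk: "disjoint_walk R (rich_pair V E l) F l q"
  shows "\<exists>m. (\<forall>i. Suc i < l \<longrightarrow> E (fst (m i)) (snd (m i)) \<and>
      adjacent_rungs E (q i) (m i) \<and> adjacent_rungs E (m i) (q (Suc i)) \<and>
      disjnt (ends (m i)) (F \<union> (\<Union>j<l. ends (q j)))) \<and>
    disjoint_family_on (ends \<circ> m) {..<l - 1}"
proof -
  have rich: "rich_pair V E l (q i) (q (Suc i))" if "Suc i < l" for i
    using walk that unfolding disjoint_walk_def by blast
  have "\<exists>P. \<forall>i. Suc i < l \<longrightarrow> finite (P i) \<and> vertex_disjoint (P i) \<and> 4 * l \<le> card (P i) \<and>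
      (\<forall>p\<in>P i. E (fst p) (snd p) \<and> adjacent_rungs E (q i) p \<and> adjacent_rungs E p (q (Suc i)))"
  proof (rule choice, rule allI)
    fix i
    show "\<exists>Pi. Suc i < l \<longrightarrow> finite Pi \<and> vertex_disjoint Pi \<and> 4 * l \<le> card Pi \<and>
      (\<forall>p\<in>Pi. E (fst p) (snd p) \<and> adjacent_rungs E (q i) p \<and> adjacent_rungs E p (q (Suc i)))"
      using rich_pair_bridges[OF rich, of i] by blast
  qed
  then obtain P where P: "\<And>i. Suc i < l \<Longrightarrow> finite (P i) \<and> vertex_disjoint (P i) \<and>
      4 * l \<le> card (P i) \<and>
      (\<forall>p\<in>P i. E (fst p) (snd p) \<and> adjacent_rungs E (q i) p \<and> adjacent_rungs E p (q (Suc i)))"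
    by blast
  define A where "A = F \<union> (\<Union>j<l. ends (q j))"
  have "card A \<le> card F + card (\<Union>j<l. ends (q j))"
    unfolding A_def by (rule card_Un_le)
  also have "\<dots> \<le> 2 + 2 * l"
    using card_UN_ends_le[where k=l and q=q] \<open>card F \<le> 2\<close> by linarith
  finally have "card A + 2 * (l - 1) \<le> 4 * l" using \<open>2 \<le> l\<close> by simp
  then have "finite (P i) \<and> vertex_disjoint (P i) \<and> card A + 2 * (l - 1) \<le> card (P i)"
    if "i < l - 1" for i
  proof -
    have "Suc i < l" using that by simp
    then show ?thesis using P[of i] \<open>card A + 2 * (l - 1) \<le> 4 * l\<close> by linarith
  qed
  moreover have "finite A" unfolding A_def using \<open>finite F\<close> by simp
  ultimately obtain m where m: "\<forall>i<l - 1. m i \<in> P i \<and> disjnt (ends (m i)) A"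
    "disjoint_family_on (ends \<circ> m) {..<l - 1}"
    using exists_disjoint_representatives[of A "l - 1" P] by blast
  have "E (fst (m i)) (snd (m i)) \<and> adjacent_rungs E (q i) (m i) \<and>
      adjacent_rungs E (m i) (q (Suc i)) \<and> disjnt (ends (m i)) A" if "Suc i < l" for i
  proof -
    have "m i \<in> P i" "disjnt (ends (m i)) A" using m that by auto
    then show ?thesis using P[OF that] by blast
  qed
  then show ?thesis using m(2) unfolding A_def by blast
qed

lemma contains_prism_of_rich_walk:
  assumes G: "graph V E" and "2 \<le> l" and "E u v"
    and walk: "disjoint_walk {r. E (fst r) (snd r) \<and> adjacent_rungs E (v, u) r} (rich_pair V E l)
      {u, v} l q"
  shows "contains_prism V E l"
proof -
  have sym: "\<And>x y. E x y \<Longrightarrow> E y x" using G unfolding graph_def by blast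
  have q: "E (fst (q i)) (snd (q i)) \<and> adjacent_rungs E (v, u) (q i) \<and> disjnt (ends (q i)) {u, v}"
    if "i < l" for i
    using walk that unfolding disjoint_walk_def by blast
  have "card {u, v} \<le> 2" by (simp add: card_insert_le_m1)
  then obtain m where m: "\<And>i. Suc i < l \<Longrightarrow> E (fst (m i)) (snd (m i)) \<and>
      adjacent_rungs E (q i) (m i) \<and> adjacent_rungs E (m i) (q (Suc i)) \<and>
      disjnt (ends (m i)) ({u, v} \<union> (\<Union>j<l. ends (q j)))"
    and disj_m: "disjoint_family_on (ends \<circ> m) {..<l - 1}"
    using exists_bridging_rungs[OF \<open>2 \<le> l\<close> _ _ walk] by blast
  \<comment> \<open>The rungs between consecutive cross edges: first \<open>vu\<close>, then the bridges.\<close>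
  define h where "h = case_nat (v, u) m"
  have ends_h0: "ends (h 0) = {u, v}" unfolding h_def ends_def by auto
  have m_avoids: "disjnt (ends (m k)) {u, v}" "disjnt (ends (m k)) (ends (q j))"
    if "Suc k < l" "j < l" for k j
    using m[OF that(1)] that(2) by auto
  show ?thesis
  proof (rule contains_prism_alternating_rungsI[OF G, of l h q])
    fix i assume "i < l"
    have "adjacent_rungs E (h i) (q i)"
      using q[OF \<open>i < l\<close>] m[of "i - 1"] \<open>i < l\<close> unfolding h_def by (cases i) auto
    moreover have "adjacent_rungs E (q i) (h (Suc i mod l))"
    proof (cases "Suc i < l")
      case True
      then show ?thesis using m[of i] unfolding h_def by simp
    next
      case False
      then have "Suc i = l" using \<open>i < l\<close> by simp
      then have "Suc i mod l = 0" by simp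
      then show ?thesis using q[OF \<open>i < l\<close>] sym unfolding h_def adjacent_rungs_def by simp
    qed
    moreover have "E (fst (h i)) (snd (h i))"
      using sym[OF \<open>E u v\<close>] m[of "i - 1"] \<open>i < l\<close> unfolding h_def by (cases i) auto
    ultimately show "E (fst (h i)) (snd (h i)) \<and> E (fst (q i)) (snd (q i)) \<and>
        adjacent_rungs E (h i) (q i) \<and> adjacent_rungs E (q i) (h (Suc i mod l))"
      using q[OF \<open>i < l\<close>] by blast
  next
    show "disjoint_family_on (ends \<circ> h) {..<l}"
    proof (unfold disjoint_family_on_def, intro ballI impI)
      fix i j assume "i \<in> {..<l}" "j \<in> {..<l}" "i \<noteq> j"
      then show "(ends \<circ> h) i \<inter> (ends \<circ> h) j = {}"
        using ends_h0 m_avoids(1) disj_m unfolding disjoint_family_on_def disjnt_def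
        by (cases i; cases j) (auto simp: h_def)
    qed
  next
    show "disjoint_family_on (ends \<circ> q) {..<l}"
      using walk unfolding disjoint_walk_def by blast
  next
    fix i j assume "i < l" "j < l"
    then show "disjnt (ends (h i)) (ends (q j))"
      using ends_h0 q[of j] m_avoids(2)[of "i - 1" j] by (cases i) (auto simp: h_def disjnt_sym)
  qed
qed

definition cross_edges :: "'a set \<Rightarrow> ('a \<Rightarrow> 'a \<Rightarrow> bool) \<Rightarrow> 'a \<Rightarrow> 'a \<Rightarrow> real \<Rightarrow> ('a \<times> 'a) set" where
  "cross_edges V E u v c = {r. E (fst r) (snd r) \<and> adjacent_rungs E (v, u) r \<and>
     real (codeg V E u (fst r)) \<le> c \<and> real (codeg V E v (snd r)) \<le> c}"

lemma finite_cross_edges: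
  assumes "graph V E"
  shows "finite (cross_edges V E u v c)"
proof (rule finite_subset)
  show "cross_edges V E u v c \<subseteq> V \<times> V"
    using assms unfolding graph_def cross_edges_def by (auto simp: mem_Times_iff)
  show "finite (V \<times> V)" using assms unfolding graph_def by simp
qed

lemma card_cross_edges_fst_le:
  assumes "graph V E" "0 \<le> c"
  shows "real (card {r\<in>cross_edges V E u v c. fst r = a}) \<le> c"
proof (cases "real (codeg V E u a) \<le> c")
  case True
  have "finite V" using assms(1) unfolding graph_def by blast
  have "{r\<in>cross_edges V E u v c. fst r = a} \<subseteq> Pair a ` {x\<in>V. E u x \<and> E a x}"
    using assms(1) unfolding graph_def cross_edges_def adjacent_rungs_def by force
  then have "card {r\<in>cross_edges V E u v c. fst r = a} \<le> card (Pair a ` {x\<in>V. E u x \<and> E a x})"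
    using \<open>finite V\<close> by (intro card_mono) auto
  also have "\<dots> \<le> codeg V E u a"
    unfolding codeg_def using \<open>finite V\<close> by (intro card_image_le) auto
  finally show ?thesis using True by linarith
next
  case False
  then have empty: "{r\<in>cross_edges V E u v c. fst r = a} = {}" unfolding cross_edges_def by auto
  show ?thesis unfolding empty using assms(2) by simp
qed

lemma cross_edges_swap:
  assumes "graph V E"
  shows "prod.swap ` cross_edges V E u v c = cross_edges V E v u c"
proof (rule set_eqI)
  have sym: "\<And>x y. E x y \<Longrightarrow> E y x" using assms unfolding graph_def by blast
  fix r
  have "r \<in> cross_edges V E v u c \<longleftrightarrow> prod.swap r \<in> cross_edges V E u v c"
    unfolding cross_edges_def adjacent_rungs_def by (cases r) (simp; blast dest: sym)
  then show "r \<in> prod.swap ` cross_edges V E u v c \<longleftrightarrow> r \<in> cross_edges V E v u c"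
    using image_iff[of r prod.swap] swap_swap by metis
qed

lemma card_cross_edges_snd_le:
  assumes "graph V E" "0 \<le> c"
  shows "real (card {r\<in>cross_edges V E u v c. snd r = a}) \<le> c"
proof -
  have "prod.swap ` {r\<in>cross_edges V E u v c. snd r = a} =
      {r\<in>prod.swap ` cross_edges V E u v c. fst r = a}"
    by force
  also have "\<dots> = {r\<in>cross_edges V E v u c. fst r = a}"
    unfolding cross_edges_swap[OF assms(1)] ..
  finally have "prod.swap ` {r\<in>cross_edges V E u v c. snd r = a} = {r\<in>cross_edges V E v u c. fst r = a}" .
  then have "card {r\<in>cross_edges V E u v c. snd r = a} = card {r\<in>cross_edges V E v u c. fst r = a}"
    using card_image[of prod.swap "{r\<in>cross_edges V E u v c. snd r = a}"] by simp
  then show ?thesis using card_cross_edges_fst_le[OF assms] by simp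
qed

lemma load_cross_edges_le:
  assumes "graph V E" "0 \<le> c"
  shows "real (card {r\<in>cross_edges V E u v c. a \<in> ends r}) \<le> 2 * c"
proof -
  have "{r\<in>cross_edges V E u v c. a \<in> ends r} =
      {r\<in>cross_edges V E u v c. fst r = a} \<union> {r\<in>cross_edges V E u v c. snd r = a}"
    unfolding ends_def by auto
  then have "card {r\<in>cross_edges V E u v c. a \<in> ends r} \<le>
      card {r\<in>cross_edges V E u v c. fst r = a} + card {r\<in>cross_edges V E u v c. snd r = a}"
    by (simp add: card_Un_le)
  then show ?thesis
    using card_cross_edges_fst_le[OF assms, of u v a] card_cross_edges_snd_le[OF assms, of u v a] by linarith
qed

lemma card_cross_edges_le:
  assumes "graph V E" "0 \<le> c" "real (degree V E v) \<le> \<Delta>"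
  shows "real (card (cross_edges V E u v c)) \<le> \<Delta> * c"
proof -
  define W where "W = {w\<in>V. E v w \<and> real (codeg V E u w) \<le> c}"
  define S where "S = (\<lambda>w. {z\<in>V. E u z \<and> E w z})"
  have "finite V" using assms(1) unfolding graph_def by blast
  then have fin: "finite W" "\<And>w. finite (S w)" unfolding W_def S_def by auto
  have "cross_edges V E u v c \<subseteq> Sigma W S"
    using assms(1) unfolding cross_edges_def adjacent_rungs_def graph_def W_def S_def by auto
  then have "card (cross_edges V E u v c) \<le> card (Sigma W S)"
    using fin by (intro card_mono) auto
  also have "\<dots> = (\<Sum>w\<in>W. card (S w))"
    using fin by (simp add: card_SigmaI)
  finally have "real (card (cross_edges V E u v c)) \<le> (\<Sum>w\<in>W. real (card (S w)))"
    by (simp flip: of_nat_sum)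
  also have "\<dots> \<le> (\<Sum>w\<in>W. c)"
    by (rule sum_mono) (simp add: W_def S_def codeg_def)
  also have "\<dots> = real (card W) * c" by simp
  also have "\<dots> \<le> real (degree V E v) * c"
  proof (rule mult_right_mono[OF _ \<open>0 \<le> c\<close>])
    have "W \<subseteq> {w\<in>V. E v w}" unfolding W_def by auto
    then show "real (card W) \<le> real (degree V E v)"
      unfolding degree_def using \<open>finite V\<close> by (simp add: card_mono)
  qed
  also have "\<dots> \<le> \<Delta> * c"
    using assms(2,3) by (rule mult_right_mono[rotated])
  finally show ?thesis .
qed

lemma card_rich_tuples_le_card_rich_pairs:
  assumes "graph V E"
  shows "card {(w, z, w', z'). rich V E l w z w' z' \<and> E u z \<and> E u z' \<and> E v w \<and> E v w' \<and>
      real (codeg V E u w) \<le> c \<and> real (codeg V E u w') \<le> c \<and>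
      real (codeg V E v z) \<le> c \<and> real (codeg V E v z') \<le> c}
    \<le> card {(r, r'). r \<in> cross_edges V E u v c \<and> r' \<in> cross_edges V E u v c \<and> rich_pair V E l r r'}"
    (is "card ?T \<le> card ?P")
proof -
  have "?T \<subseteq> (\<lambda>(r, r'). (fst r, snd r, fst r', snd r')) ` ?P"
    unfolding cross_edges_def rich_pair_def adjacent_rungs_def
    by (auto simp: rich_def image_iff)
  moreover have "finite ?P"
    by (rule finite_subset[of _ "cross_edges V E u v c \<times> cross_edges V E u v c"])
      (use finite_cross_edges[OF assms] in auto)
  ultimately show ?thesis
    by (meson card_image_le card_mono finite_imageI order_trans)
qed

lemma card_rich_tuples_le:
  assumes G: "graph V E" and "2 \<le> l" and "\<not> contains_prism V E l" and "E u v" and "0 \<le> c"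
    and max_degree: "\<forall>x\<in>V. real (degree V E x) \<le> \<Delta>"
  shows "real (card {(w, z, w', z'). rich V E l w z w' z' \<and> E u z \<and> E u z' \<and> E v w \<and> E v w' \<and>
      real (codeg V E u w) \<le> c \<and> real (codeg V E u w') \<le> c \<and>
      real (codeg V E v z) \<le> c \<and> real (codeg V E v z') \<le> c})
    \<le> 8 * (1 + real l) * \<Delta> * c\<^sup>2"
proof -
  define R where "R = cross_edges V E u v c"
  have "\<nexists>q. disjoint_walk R (rich_pair V E l) {u, v} l q"
  proof
    assume "\<exists>q. disjoint_walk R (rich_pair V E l) {u, v} l q"
    moreover have "R \<subseteq> {r. E (fst r) (snd r) \<and> adjacent_rungs E (v, u) r}"
      unfolding R_def cross_edges_def by blast
    ultimately show False
      using contains_prism_of_rich_walk[OF G \<open>2 \<le> l\<close> \<open>E u v\<close>] disjoint_walk_mono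
        \<open>\<not> contains_prism V E l\<close> by blast
  qed
  then have "real (card {(r, r'). r \<in> R \<and> r' \<in> R \<and> rich_pair V E l r r'})
      \<le> 2 * ((real (card {u, v}) + 2 * real l) * (2 * c)) * real (card R)"
    unfolding R_def
    using card_related_pairs_le_no_disjoint_walk[OF finite_cross_edges[OF G] _ symp_rich_pair[OF G]]
      load_cross_edges_le[OF G \<open>0 \<le> c\<close>]
    by blast
  also have "\<dots> \<le> 8 * (1 + real l) * c * (\<Delta> * c)"
  proof -
    have "u \<noteq> v" "v \<in> V" using \<open>E u v\<close> G unfolding graph_def by blast+
    then have "real (card R) \<le> \<Delta> * c"
      unfolding R_def using card_cross_edges_le[OF G \<open>0 \<le> c\<close>] max_degree by blast
    moreover have "0 \<le> 8 * (1 + real l) * c" using \<open>0 \<le> c\<close> by simp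
    ultimately have "8 * (1 + real l) * c * real (card R) \<le> 8 * (1 + real l) * c * (\<Delta> * c)"
      by (rule mult_left_mono)
    then show ?thesis using \<open>u \<noteq> v\<close> by (simp add: algebra_simps)
  qed
  finally show ?thesis
    using card_rich_tuples_le_card_rich_pairs[OF G, of l u v c] unfolding R_def
    by (simp add: power2_eq_square algebra_simps)
qed

theorem lemma5p6:
  fixes l :: nat and K C\<^sub>0 :: real
  assumes "l \<ge> 2" and "K \<ge> 1" and "C\<^sub>0 > 0"
  shows "\<exists>M :: real. \<forall>(V :: nat set) (E :: nat \<Rightarrow> nat \<Rightarrow> bool) u v.
     graph V E \<longrightarrow> bipartite V E \<longrightarrow> \<not> contains_prism V E l \<longrightarrow>
     avg_degree V E \<ge> C\<^sub>0 * sqrt (real (card V)) \<longrightarrow>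
     (\<forall>x\<in>V. real (degree V E x) \<le> K * avg_degree V E) \<longrightarrow>
     E u v \<longrightarrow>
     real (card {(w, z, w', z'). rich V E l w z w' z' \<and>
                  E u z \<and> E u z' \<and> E v w \<and> E v w' \<and>
                  real (codeg V E u w) \<le> C\<^sub>0 * sqrt (avg_degree V E) \<and>
                  real (codeg V E u w') \<le> C\<^sub>0 * sqrt (avg_degree V E) \<and>
                  real (codeg V E v z) \<le> C\<^sub>0 * sqrt (avg_degree V E) \<and>
                  real (codeg V E v z') \<le> C\<^sub>0 * sqrt (avg_degree V E)})
       \<le> M * (avg_degree V E)\<^sup>2"
proof (intro exI[of _ "8 * (1 + real l) * K * C\<^sub>0\<^sup>2"] allI impI, goal_cases)
  case (1 V E u v)
  then have G: "graph V E" and "\<not> contains_prism V E l" and "E u v"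
    and max_degree: "\<forall>x\<in>V. real (degree V E x) \<le> K * avg_degree V E"
    by blast+
  have "0 \<le> avg_degree V E" unfolding avg_degree_def by (simp add: sum_nonneg)
  then have "0 \<le> C\<^sub>0 * sqrt (avg_degree V E)" using \<open>C\<^sub>0 > 0\<close> by simp
  from card_rich_tuples_le[OF G \<open>l \<ge> 2\<close> \<open>\<not> contains_prism V E l\<close> \<open>E u v\<close> this max_degree]
  show ?case
    using \<open>0 \<le> avg_degree V E\<close> by (simp add: power_mult_distrib power2_eq_square algebra_simps)
qed

end
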